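(* Let $\mathcal{H}$ be a complex Hilbert space and let $A,B,X\in\mathcal{B}(\mathcal{H})$ be such that the operators $A$, $X$, $X^{*}$, $B$ pairwise commute, $A$ is positive and invertible, and the operator matrix $$M=\begin{pmatrix} A & X\\ X^{*} & B\end{pmatrix}\in\mathcal{B}(\mathcal{H}\oplus\mathcal{H})$$ is positive. Put $\operatorname{tr}M:=A+B$, $\det M:=AB-X^{*}X$ and $Q:=(\det M)^{1/2}$. Then $\operatorname{tr}M+2Q$ is positive and invertible, and $$\sqrt{M}=\begin{pmatrix} (\operatorname{tr}M+2Q)^{-1/2} & 0\\ 0 & (\operatorname{tr}M+2Q)^{-1/2}\end{pmatrix}\begin{pmatrix} A+Q & X\\ X^{*} & B+Q\end{pmatrix}.$$
   Context: $\sqrt{M}$ denotes the unique positive square root of the positive operator $M$. Under the hypotheses, $\det M$ is a positive operator lying in the abelian unital $C^*$-algebra generated by $A,X,B$, so $Q$ is its positive square root. *)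

theory Defs
  imports "HOL-Analysis.Analysis"
begin

class complex_hilbert = real_normed_vector + complete_space +
  fixes scaleC :: "complex \<Rightarrow> 'a \<Rightarrow> 'a"
    and cinner :: "'a \<Rightarrow> 'a \<Rightarrow> complex"
  assumes scaleC_add_right: "scaleC c (x + y) = scaleC c x + scaleC c y"
    and scaleC_add_left: "scaleC (c + d) x = scaleC c x + scaleC d x"
    and scaleC_scaleC: "scaleC c (scaleC d x) = scaleC (c * d) x"
    and scaleC_one: "scaleC 1 x = x"
    and scaleR_scaleC: "scaleR r x = scaleC (complex_of_real r) x"
    and cinner_commute: "cinner x y = cnj (cinner y x)"
    and cinner_add_left: "cinner (x + y) z = cinner x z + cinner y z"
    and cinner_scaleC_left: "cinner (scaleC c x) y = cnj c * cinner x y"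
    and cinner_self_nonneg: "0 \<le> Re (cinner x x)"
    and cinner_self_eq_zero: "cinner x x = 0 \<longleftrightarrow> x = 0"
    and norm_eq_sqrt_cinner: "norm x = sqrt (Re (cinner x x))"

text \<open>The direct sum H \<oplus> H, realised as the product type.\<close>

instantiation prod :: (complex_hilbert, complex_hilbert) complex_hilbert
begin

definition scaleC_prod_def: "scaleC c p = (scaleC c (fst p), scaleC c (snd p))"
definition cinner_prod_def: "cinner p q = cinner (fst p) (fst q) + cinner (snd p) (snd q)"

instance
proof
  fix c d :: complex and x y z :: "'a \<times> 'b" and r :: real
  show "scaleC c (x + y) = scaleC c x + scaleC c y"
    by (simp add: scaleC_prod_def scaleC_add_right)
  show "scaleC (c + d) x = scaleC c x + scaleC d x"
    by (simp add: scaleC_prod_def scaleC_add_left)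
  show "scaleC c (scaleC d x) = scaleC (c * d) x"
    by (simp add: scaleC_prod_def scaleC_scaleC)
  show "scaleC 1 x = x"
    by (simp add: scaleC_prod_def scaleC_one)
  show "scaleR r x = scaleC (complex_of_real r) x"
    by (simp add: scaleC_prod_def scaleR_scaleC scaleR_prod_def)
  show "cinner x y = cnj (cinner y x)"
    by (simp add: cinner_prod_def cinner_commute[of "fst x"] cinner_commute[of "snd x"])
  show "cinner (x + y) z = cinner x z + cinner y z"
    by (simp add: cinner_prod_def cinner_add_left)
  show "cinner (scaleC c x) y = cnj c * cinner x y"
    by (simp add: cinner_prod_def scaleC_prod_def cinner_scaleC_left distrib_left)
  show "0 \<le> Re (cinner x x)"
    by (simp add: cinner_prod_def add_nonneg_nonneg cinner_self_nonneg)
  have n1: "Re (cinner u u) = (norm u)\<^sup>2" for u :: 'a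
    using cinner_self_nonneg[of u] by (simp add: norm_eq_sqrt_cinner)
  have n2: "Re (cinner u u) = (norm u)\<^sup>2" for u :: 'b
    using cinner_self_nonneg[of u] by (simp add: norm_eq_sqrt_cinner)
  show "norm x = sqrt (Re (cinner x x))"
    by (simp add: cinner_prod_def norm_prod_def n1 n2)
  show "cinner x x = 0 \<longleftrightarrow> x = 0"
  proof
    assume h: "cinner x x = 0"
    then have "Re (cinner x x) = 0" by simp
    then have "(norm (fst x))\<^sup>2 + (norm (snd x))\<^sup>2 = 0"
      by (simp add: cinner_prod_def n1 n2)
    then have "fst x = 0" "snd x = 0"
      by (simp_all add: add_nonneg_eq_0_iff)
    then show "x = 0" by (simp add: prod_eq_iff)
  next
    assume "x = 0"
    then show "cinner x x = 0"
      using cinner_self_eq_zero[of "0::'a"] cinner_self_eq_zero[of "0::'b"]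
      by (simp add: cinner_prod_def)
  qed
qed

end

definition bounded_op :: "('a::complex_hilbert \<Rightarrow> 'b::complex_hilbert) \<Rightarrow> bool" where
  "bounded_op T \<longleftrightarrow> bounded_linear T \<and> (\<forall>c x. T (scaleC c x) = scaleC c (T x))"

definition adj :: "('a::complex_hilbert \<Rightarrow> 'b::complex_hilbert) \<Rightarrow> ('b \<Rightarrow> 'a)" where
  "adj T = (THE S. \<forall>x y. cinner (T x) y = cinner x (S y))"

definition positive_op :: "('a::complex_hilbert \<Rightarrow> 'a) \<Rightarrow> bool" where
  "positive_op T \<longleftrightarrow> bounded_op T \<and>
     (\<forall>x. Im (cinner x (T x)) = 0 \<and> 0 \<le> Re (cinner x (T x)))"

definition invertible_op :: "('a::complex_hilbert \<Rightarrow> 'a) \<Rightarrow> bool" where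
  "invertible_op T \<longleftrightarrow> bounded_op T \<and>
     (\<exists>S. bounded_op S \<and> S \<circ> T = id \<and> T \<circ> S = id)"

definition op_inv :: "('a::complex_hilbert \<Rightarrow> 'a) \<Rightarrow> ('a \<Rightarrow> 'a)" where
  "op_inv T = (THE S. S \<circ> T = id \<and> T \<circ> S = id)"

definition op_sqrt :: "('a::complex_hilbert \<Rightarrow> 'a) \<Rightarrow> ('a \<Rightarrow> 'a)" where
  "op_sqrt T = (THE S. positive_op S \<and> S \<circ> S = T)"

definition op_matrix :: "('a::complex_hilbert \<Rightarrow> 'a) \<Rightarrow> ('a \<Rightarrow> 'a) \<Rightarrow> ('a \<Rightarrow> 'a) \<Rightarrow> ('a \<Rightarrow> 'a)
    \<Rightarrow> ('a \<times> 'a \<Rightarrow> 'a \<times> 'a)" where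
  "op_matrix P Q R S = (\<lambda>(x, y). (P x + Q y, R x + S y))"

end

(*
  Since the entries of M commute, Q = (det M)^(1/2) satisfies Q^2 = A B - X* X, and the block
  N = [[A + Q, X], [X*, B + Q]] satisfies N^2 = (tr M + 2 Q) M: this is the operator form of the
  Cayley-Hamilton identity (M + s)^2 = (tr M + 2 s) M for 2x2 matrices, s = (det M)^(1/2).
  Positivity of M makes the Schur complement B - X* A^-1 X positive, so det M = A (B - X* A^-1 X)
  is a product of commuting positive operators, hence positive; and tr M + 2 Q >= A is bounded
  below, hence invertible.  Thus (tr M + 2 Q)^(-1/2) N is a positive operator with square M, so it
  is the positive square root of M by uniqueness.  Positive square roots themselves come from the
  monotone iteration Y' = (C + Y^2)/2, whose limit L gives (1 - C)^(1/2) = 1 - L.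
*)

theory Submission
  imports Defs
begin

lemma scaleC_zero_right [simp]: "scaleC c (0::'a::complex_hilbert) = 0"
  using scaleC_add_right[of c "0::'a" 0] by simp

lemma scaleC_minus_right: "scaleC c (- x) = - scaleC c (x::'a::complex_hilbert)"
  using scaleC_add_right[of c x "- x"] by (simp add: eq_neg_iff_add_eq_0 add.commute)

lemma scaleC_diff_right: "scaleC c (x - y) = scaleC c x - scaleC c (y::'a::complex_hilbert)"
  using scaleC_add_right[of c x "- y"] by (simp add: scaleC_minus_right)

lemma scaleC_scaleR_commute: "scaleC c (r *\<^sub>R x) = r *\<^sub>R scaleC c (x::'a::complex_hilbert)"
  by (simp add: scaleR_scaleC scaleC_scaleC mult.commute)

lemma cinner_add_right: "cinner x (y + z) = cinner x y + cinner x (z::'a::complex_hilbert)"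
  by (metis cinner_add_left cinner_commute complex_cnj_add)

lemma cinner_scaleC_right: "cinner x (scaleC c y) = c * cinner x (y::'a::complex_hilbert)"
  by (metis cinner_commute cinner_scaleC_left complex_cnj_cnj complex_cnj_mult)

lemma cinner_zero_left [simp]: "cinner 0 (x::'a::complex_hilbert) = 0"
  using cinner_add_left[of 0 0 x] by simp

lemma cinner_zero_right [simp]: "cinner x (0::'a::complex_hilbert) = 0"
  using cinner_add_right[of x 0 0] by simp

lemma cinner_minus_left: "cinner (- x) y = - cinner x (y::'a::complex_hilbert)"
  using cinner_add_left[of x "- x" y] by (simp add: eq_neg_iff_add_eq_0 add.commute)

lemma cinner_minus_right: "cinner x (- y) = - cinner x (y::'a::complex_hilbert)"
  using cinner_add_right[of x y "- y"] by (simp add: eq_neg_iff_add_eq_0 add.commute)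

lemma cinner_diff_left: "cinner (x - y) z = cinner x z - cinner y (z::'a::complex_hilbert)"
  using cinner_add_left[of x "- y" z] by (simp add: cinner_minus_left)

lemma cinner_diff_right: "cinner x (y - z) = cinner x y - cinner x (z::'a::complex_hilbert)"
  using cinner_add_right[of x y "- z"] by (simp add: cinner_minus_right)

lemma cinner_scaleR_right: "cinner x (r *\<^sub>R y) = complex_of_real r * cinner x (y::'a::complex_hilbert)"
  by (simp add: scaleR_scaleC cinner_scaleC_right)

lemmas cinner_simps = cinner_add_left cinner_add_right cinner_diff_left cinner_diff_right
  cinner_minus_left cinner_minus_right cinner_scaleR_right
  cinner_scaleC_left cinner_scaleC_right

lemma cinner_self_eq_norm_power2: "cinner x x = complex_of_real ((norm (x::'a::complex_hilbert))\<^sup>2)"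
proof -
  have "Im (cinner x x) = Im (cnj (cinner x x))"
    by (metis cinner_commute)
  then have "Im (cinner x x) = 0"
    by simp
  moreover have "Re (cinner x x) = (norm x)\<^sup>2"
    using cinner_self_nonneg[of x] by (simp add: norm_eq_sqrt_cinner)
  ultimately show ?thesis by (simp add: complex_eq_iff)
qed

lemma Re_cinner_self: "Re (cinner x x) = (norm (x::'a::complex_hilbert))\<^sup>2"
  by (simp add: cinner_self_eq_norm_power2)

lemma cinner_Pair [simp]: "cinner (a, b) (c, d) = cinner a c + cinner b d"
  by (simp add: cinner_prod_def)

lemma norm_diff_power2:
  "(norm (u - v))\<^sup>2 = (norm u)\<^sup>2 - 2 * Re (cinner u v) + (norm (v::'a::complex_hilbert))\<^sup>2"
proof -
  have "Re (cinner v u) = Re (cinner u v)"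
    using cinner_commute[of v u] by simp
  then show ?thesis
    using Re_cinner_self[of "u - v"] by (simp add: cinner_diff_left cinner_diff_right Re_cinner_self)
qed

lemma bounded_op_bounded_linear: "bounded_op T \<Longrightarrow> bounded_linear T"
  by (simp add: bounded_op_def)

lemma bounded_op_simps:
  assumes "bounded_op T"
  shows "T (a + b) = T a + T b" "T (a - b) = T a - T b" "T 0 = 0" "T (- a) = - T a"
    "T (r *\<^sub>R a) = r *\<^sub>R T a" "T (scaleC c a) = scaleC c (T a)"
  using assms linear_simps[OF bounded_op_bounded_linear[OF assms]] by (simp_all add: bounded_op_def)

lemma bounded_op_compose: "bounded_op S \<Longrightarrow> bounded_op T \<Longrightarrow> bounded_op (\<lambda>x. S (T x))"
  unfolding bounded_op_def using bounded_linear_compose[of S T] by auto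

lemma bounded_op_add: "bounded_op S \<Longrightarrow> bounded_op T \<Longrightarrow> bounded_op (\<lambda>x. S x + T x)"
  unfolding bounded_op_def using bounded_linear_add[of S T] by (auto simp: scaleC_add_right)

lemma bounded_op_diff: "bounded_op S \<Longrightarrow> bounded_op T \<Longrightarrow> bounded_op (\<lambda>x. S x - T x)"
  unfolding bounded_op_def using bounded_linear_sub[of S T] by (auto simp: scaleC_diff_right)

lemma bounded_op_scaleR: "bounded_op S \<Longrightarrow> bounded_op (\<lambda>x. a *\<^sub>R S x)"
  unfolding bounded_op_def
  using bounded_linear_compose[OF bounded_linear_scaleR_right, of S a]
  by (auto simp: scaleC_scaleR_commute)

lemma bounded_op_zero: "bounded_op (\<lambda>x. 0 :: 'a::complex_hilbert)"
  unfolding bounded_op_def by (simp add: bounded_linear_zero)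

lemma bounded_op_ident: "bounded_op (\<lambda>x::'a::complex_hilbert. x)"
  unfolding bounded_op_def by (simp add: bounded_linear_ident)

lemma bounded_op_funpow:
  fixes C :: "'a::complex_hilbert \<Rightarrow> 'a"
  shows "bounded_op C \<Longrightarrow> bounded_op (C ^^ k)"
proof (induction k)
  case 0
  then show ?case using bounded_op_ident by (simp add: id_def)
next
  case (Suc k)
  then show ?case using bounded_op_compose[of C "C ^^ k"] by simp
qed

lemma positive_op_bounded: "positive_op T \<Longrightarrow> bounded_op T"
  by (simp add: positive_op_def)

lemma positive_op_Im_cinner: "positive_op T \<Longrightarrow> Im (cinner x (T x)) = 0"
  by (simp add: positive_op_def)

lemma positive_op_Re_cinner: "positive_op T \<Longrightarrow> 0 \<le> Re (cinner x (T x))"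
  by (simp add: positive_op_def)

lemma positive_op_pullback:
  assumes "positive_op T" "bounded_op S" "\<And>x. cinner x (S x) = cinner (f x) (T (f x))"
  shows "positive_op S"
  using assms by (simp add: positive_op_def)

lemma positive_op_ident: "positive_op (\<lambda>x::'a::complex_hilbert. x)"
  by (simp add: positive_op_def bounded_op_ident cinner_self_eq_norm_power2)

lemma positive_op_zero: "positive_op (\<lambda>x. 0 :: 'a::complex_hilbert)"
  by (simp add: positive_op_def bounded_op_zero)

lemma positive_op_add: "positive_op S \<Longrightarrow> positive_op T \<Longrightarrow> positive_op (\<lambda>x. S x + T x)"
  by (simp add: positive_op_def bounded_op_add cinner_add_right)

lemma positive_op_scaleR: "positive_op S \<Longrightarrow> 0 \<le> a \<Longrightarrow> positive_op (\<lambda>x. a *\<^sub>R S x)"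
  by (simp add: positive_op_def bounded_op_scaleR cinner_scaleR_right)

text \<open>Polarization: the quadratic form of a positive operator is real, so its sesquilinear form
  is hermitian.\<close>

lemma positive_op_selfadjoint:
  assumes T: "positive_op T"
  shows "cinner x (T y) = cinner (T x) y"
proof -
  note T_simps = bounded_op_simps[OF positive_op_bounded[OF T]]
  define p where "p = cinner x (T y)"
  define q where "q = cinner y (T x)"
  have "Im (cinner (x + y) (T (x + y))) = 0"
    using positive_op_Im_cinner[OF T] .
  then have "Im p + Im q = 0"
    using positive_op_Im_cinner[OF T, of x] positive_op_Im_cinner[OF T, of y]
    by (simp add: T_simps cinner_simps p_def q_def)
  moreover have "Im (cinner (x + scaleC \<i> y) (T (x + scaleC \<i> y))) = 0"
    using positive_op_Im_cinner[OF T] .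
  then have "Re p - Re q = 0"
    using positive_op_Im_cinner[OF T, of x] positive_op_Im_cinner[OF T, of y]
    by (simp add: T_simps cinner_simps p_def q_def algebra_simps)
  ultimately have "p = cnj q"
    by (simp add: complex_eq_iff)
  then show ?thesis
    using cinner_commute[of "T x" y] by (simp add: p_def q_def)
qed

lemma positive_op_cauchy_schwarz:
  assumes T: "positive_op T"
  shows "(cmod (cinner x (T y)))\<^sup>2 \<le> Re (cinner x (T x)) * Re (cinner y (T y))"
proof -
  note T_simps = bounded_op_simps[OF positive_op_bounded[OF T]]
  define b where "b = cinner x (T y)"
  define a where "a = Re (cinner x (T x))"
  define c where "c = Re (cinner y (T y))"
  have "0 \<le> a" "0 \<le> c"
    using positive_op_Re_cinner[OF T] by (simp_all add: a_def c_def)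
  have xx: "cinner x (T x) = complex_of_real a" and yy: "cinner y (T y) = complex_of_real c"
    using positive_op_Im_cinner[OF T, of x] positive_op_Im_cinner[OF T, of y]
    by (simp_all add: a_def c_def complex_eq_iff)
  have yx: "cinner y (T x) = cnj b"
    using positive_op_selfadjoint[OF T, of y x] cinner_commute[of "T y" x] by (simp add: b_def)
  have b_cnj_b: "b * cnj b = complex_of_real ((cmod b)\<^sup>2)"
    by (metis complex_norm_square of_real_power)
  have quadratic: "0 \<le> a - 2 * t * (cmod b)\<^sup>2 + t\<^sup>2 * (cmod b)\<^sup>2 * c" for t :: real
  proof -
    define s where "s = complex_of_real t * cnj b"
    have "cinner (x - scaleC s y) (T (x - scaleC s y))
        = cinner x (T x) - s * b - cnj s * cnj b + cnj s * s * cinner y (T y)"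
      by (simp add: T_simps cinner_simps b_def yx algebra_simps)
    also have "\<dots> = complex_of_real (a - 2 * t * (cmod b)\<^sup>2 + t\<^sup>2 * (cmod b)\<^sup>2 * c)"
    proof -
      have "s * b = complex_of_real (t * (cmod b)\<^sup>2)" "cnj s * cnj b = complex_of_real (t * (cmod b)\<^sup>2)"
        using b_cnj_b by (simp_all add: s_def algebra_simps)
      moreover have "cnj s * s = complex_of_real (t\<^sup>2 * (cmod b)\<^sup>2)"
        using b_cnj_b by (simp add: s_def algebra_simps power2_eq_square)
      ultimately show ?thesis
        by (simp add: xx yy)
    qed
    finally show ?thesis
      using positive_op_Re_cinner[OF T, of "x - scaleC s y"] by simp
  qed
  show ?thesis
  proof (cases "c = 0")
    case True
    have "cmod b = 0"
    proof (rule ccontr)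
      assume "cmod b \<noteq> 0"
      then have "a - 2 * ((a + 1) / (2 * (cmod b)\<^sup>2)) * (cmod b)\<^sup>2 = -1"
        by (simp add: field_simps)
      then show False
        using quadratic[of "(a + 1) / (2 * (cmod b)\<^sup>2)"] True by simp
    qed
    then show ?thesis
      using \<open>0 \<le> a\<close> True by (simp add: a_def b_def c_def)
  next
    case False
    then have "0 < c"
      using \<open>0 \<le> c\<close> by simp
    have "a - 2 * (1 / c) * (cmod b)\<^sup>2 + (1 / c)\<^sup>2 * (cmod b)\<^sup>2 * c = a - (cmod b)\<^sup>2 / c"
      using \<open>0 < c\<close> by (simp add: field_simps power2_eq_square)
    then have "(cmod b)\<^sup>2 / c \<le> a"
      using quadratic[of "1 / c"] by simp
    then show ?thesis
      using \<open>0 < c\<close> by (simp add: a_def b_def c_def field_simps)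
  qed
qed

lemma cinner_cauchy_schwarz: "cmod (cinner x y) \<le> norm x * norm (y::'a::complex_hilbert)"
proof -
  have "(cmod (cinner x y))\<^sup>2 \<le> (norm x * norm y)\<^sup>2"
    using positive_op_cauchy_schwarz[OF positive_op_ident, of x y]
    by (simp add: Re_cinner_self power_mult_distrib)
  then show ?thesis
    by (rule power2_le_imp_le) simp
qed

lemma Re_cinner_le_norm: "Re (cinner x y) \<le> norm x * norm (y::'a::complex_hilbert)"
  using cinner_cauchy_schwarz[of x y] abs_Re_le_cmod[of "cinner x y"] by linarith

lemma norm_scaleC: "norm (scaleC c x) = cmod c * norm (x::'a::complex_hilbert)"
proof -
  have "cinner (scaleC c x) (scaleC c x) = (cnj c * c) * cinner x x"
    by (simp add: cinner_scaleC_left cinner_scaleC_right)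
  also have "cnj c * c = complex_of_real ((cmod c)\<^sup>2)"
    by (metis complex_norm_square mult.commute of_real_power)
  finally have "cinner (scaleC c x) (scaleC c x) = complex_of_real ((cmod c * norm x)\<^sup>2)"
    by (simp add: cinner_self_eq_norm_power2 power_mult_distrib)
  then have "(norm (scaleC c x))\<^sup>2 = (cmod c * norm x)\<^sup>2"
    using Re_cinner_self[of "scaleC c x"] by simp
  then show ?thesis
    by (rule power2_eq_imp_eq) simp_all
qed

lemma bounded_linear_scaleC: "bounded_linear (scaleC c :: 'a::complex_hilbert \<Rightarrow> 'a)"
  by (rule bounded_linear_intro[where K = "cmod c"])
    (simp_all add: scaleC_add_right scaleC_scaleR_commute norm_scaleC mult.commute)

lemma bounded_linear_cinner_right: "bounded_linear (cinner (x::'a::complex_hilbert))"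
proof (rule bounded_linear_intro[where K = "norm x"])
  show "norm (cinner x y) \<le> norm y * norm x" for y
    using cinner_cauchy_schwarz[of x y] by (simp add: mult.commute)
qed (simp_all add: cinner_add_right cinner_scaleR_right scaleR_conv_of_real)

text \<open>Cauchy-Schwarz for the form of \<open>T\<close>, applied to \<open>T x\<close> and \<open>x\<close>.\<close>

lemma positive_op_norm_power2_le:
  assumes T: "positive_op T" and K: "\<And>y. norm (T y) \<le> K * norm y" and "0 \<le> K"
  shows "(norm (T x))\<^sup>2 \<le> K * Re (cinner x (T x))"
proof (cases "T x = 0")
  case True
  then show ?thesis
    using positive_op_Re_cinner[OF T, of x] \<open>0 \<le> K\<close> by simp
next
  case False
  have "((norm (T x))\<^sup>2)\<^sup>2 \<le> Re (cinner (T x) (T (T x))) * Re (cinner x (T x))"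
    using positive_op_cauchy_schwarz[OF T, of "T x" x]
    by (simp add: cinner_self_eq_norm_power2 norm_power)
  also have "\<dots> \<le> (K * (norm (T x))\<^sup>2) * Re (cinner x (T x))"
  proof (rule mult_right_mono)
    have "Re (cinner (T x) (T (T x))) \<le> norm (T x) * norm (T (T x))"
      by (rule Re_cinner_le_norm)
    also have "\<dots> \<le> norm (T x) * (K * norm (T x))"
      using K by (simp add: mult_left_mono)
    finally show "Re (cinner (T x) (T (T x))) \<le> K * (norm (T x))\<^sup>2"
      by (simp add: power2_eq_square algebra_simps)
  qed (rule positive_op_Re_cinner[OF T])
  finally have "(norm (T x))\<^sup>2 * (norm (T x))\<^sup>2 \<le> (norm (T x))\<^sup>2 * (K * Re (cinner x (T x)))"
    by (simp add: power2_eq_square algebra_simps)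
  moreover have "0 < (norm (T x))\<^sup>2"
    using False by simp
  ultimately show ?thesis
    by (meson mult_le_cancel_left_pos)
qed

lemma
  assumes T: "positive_op T" and contraction: "\<And>y. norm (T y) \<le> norm y"
  shows positive_op_ident_minus: "positive_op (\<lambda>x. x - T x)"
    and norm_ident_minus_le: "norm (x - T x) \<le> norm x"
proof -
  have "Re (cinner x (T x)) \<le> (norm x)\<^sup>2" for x
    using Re_cinner_le_norm[of x "T x"] mult_left_mono[OF contraction[of x] norm_ge_zero[of x]]
    by (simp add: power2_eq_square)
  then show "positive_op (\<lambda>x. x - T x)"
    using positive_op_Im_cinner[OF T] positive_op_bounded[OF T]
    by (simp add: positive_op_def bounded_op_diff bounded_op_ident cinner_diff_right
        cinner_self_eq_norm_power2)
  have "(norm (T x))\<^sup>2 \<le> Re (cinner x (T x))"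
    using positive_op_norm_power2_le[OF T, of 1] contraction by simp
  then have "(norm (x - T x))\<^sup>2 \<le> (norm x)\<^sup>2"
    using positive_op_Re_cinner[OF T, of x] by (simp add: norm_diff_power2)
  then show "norm (x - T x) \<le> norm x"
    by (rule power2_le_imp_le) simp
qed

lemma positive_op_funpow_selfadjoint:
  fixes C :: "'a::complex_hilbert \<Rightarrow> 'a"
  assumes C: "positive_op C"
  shows "cinner x ((C ^^ k) y) = cinner ((C ^^ k) x) y"
proof (induction k arbitrary: x y)
  case (Suc k)
  have "cinner x (C ((C ^^ k) y)) = cinner ((C ^^ k) (C x)) y"
    using positive_op_selfadjoint[OF C] Suc by simp
  then show ?case
    by (simp add: funpow_swap1)
qed simp

lemma positive_op_funpow:
  fixes C :: "'a::complex_hilbert \<Rightarrow> 'a"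
  assumes C: "positive_op C"
  shows "positive_op (C ^^ k)"
proof (cases "even k")
  case True
  then obtain j where "k = j + j"
    by (metis evenE mult_2)
  then have "cinner x ((C ^^ k) x) = cinner ((C ^^ j) x) ((C ^^ j) x)" for x
    using positive_op_funpow_selfadjoint[OF C] by (simp add: funpow_add)
  then show ?thesis
    by (rule positive_op_pullback[OF positive_op_ident bounded_op_funpow[OF positive_op_bounded[OF C]]])
next
  case False
  then obtain j where "k = Suc (j + j)"
    by (metis oddE mult_2 Suc_eq_plus1)
  then have "cinner x ((C ^^ k) x) = cinner ((C ^^ j) x) (C ((C ^^ j) x))" for x
    using positive_op_funpow_selfadjoint[OF C] by (simp add: funpow_add funpow_swap1)
  then show ?thesis
    by (rule positive_op_pullback[OF C bounded_op_funpow[OF positive_op_bounded[OF C]]])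
qed

section \<open>Square roots of positive operators\<close>

text \<open>The operators \<open>p(C)\<close> for polynomials \<open>p\<close> with nonnegative real coefficients.\<close>

inductive_set poly_cone :: "('a::complex_hilbert \<Rightarrow> 'a) \<Rightarrow> ('a \<Rightarrow> 'a) set" for C where
  funpow: "C ^^ k \<in> poly_cone C"
| zero: "(\<lambda>x. 0) \<in> poly_cone C"
| add: "P \<in> poly_cone C \<Longrightarrow> P' \<in> poly_cone C \<Longrightarrow> (\<lambda>x. P x + P' x) \<in> poly_cone C"
| scaleR: "P \<in> poly_cone C \<Longrightarrow> 0 \<le> a \<Longrightarrow> (\<lambda>x. a *\<^sub>R P x) \<in> poly_cone C"

lemma poly_cone_bounded: "P \<in> poly_cone C \<Longrightarrow> bounded_op C \<Longrightarrow> bounded_op P"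
  by (induction rule: poly_cone.induct)
    (auto intro: bounded_op_funpow bounded_op_zero bounded_op_add bounded_op_scaleR)

lemma poly_cone_positive: "P \<in> poly_cone C \<Longrightarrow> positive_op C \<Longrightarrow> positive_op P"
  by (induction rule: poly_cone.induct)
    (auto intro: positive_op_funpow positive_op_zero positive_op_add positive_op_scaleR)

lemma poly_cone_commute:
  assumes "P \<in> poly_cone C" "bounded_linear U" "\<And>x. U (C x) = C (U x)"
  shows "U (P x) = P (U x)"
  using assms
proof (induction arbitrary: x rule: poly_cone.induct)
  case (funpow k)
  then show ?case
    by (induction k arbitrary: x) auto
qed (simp_all add: linear_simps)

lemma poly_cone_compose:
  assumes "P \<in> poly_cone C" "P' \<in> poly_cone C" "bounded_op C"
  shows "(\<lambda>x. P (P' x)) \<in> poly_cone C"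
  using assms
proof (induction rule: poly_cone.induct)
  case (funpow k)
  note simps = bounded_op_simps[OF bounded_op_funpow[OF \<open>bounded_op C\<close>, of k]]
  from \<open>P' \<in> poly_cone C\<close> show ?case
  proof (induction rule: poly_cone.induct)
    case (funpow j)
    then show ?case
      using poly_cone.funpow[where k = "k + j"] by (simp add: funpow_add comp_def)
  qed (simp_all add: simps poly_cone.intros)
qed (simp_all add: poly_cone.intros)

text \<open>If \<open>Y\<^sub>n \<rightarrow> L\<close>, then \<open>L = (C + L\<^sup>2)/2\<close>, i.e. \<open>(1 - L)\<^sup>2 = 1 - C\<close>.\<close>

primrec sqrt_iter :: "('a::complex_hilbert \<Rightarrow> 'a) \<Rightarrow> nat \<Rightarrow> 'a \<Rightarrow> 'a" where
  "sqrt_iter C 0 = (\<lambda>x. 0)"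
| "sqrt_iter C (Suc n) = (\<lambda>x. (1/2) *\<^sub>R (C x + sqrt_iter C n (sqrt_iter C n x)))"

definition sqrt_iter_lim :: "('a::complex_hilbert \<Rightarrow> 'a) \<Rightarrow> 'a \<Rightarrow> 'a" where
  "sqrt_iter_lim C x = lim (\<lambda>n. sqrt_iter C n x)"

context
  fixes C :: "'a::complex_hilbert \<Rightarrow> 'a"
  assumes C: "positive_op C" and contraction: "\<And>y. norm (C y) \<le> norm y"
begin

lemma sqrt_iter_poly_cone: "sqrt_iter C n \<in> poly_cone C"
proof (induction n)
  case (Suc n)
  have "(\<lambda>x. (C ^^ 1) x + sqrt_iter C n (sqrt_iter C n x)) \<in> poly_cone C"
    by (rule poly_cone.add[OF poly_cone.funpow poly_cone_compose[OF Suc Suc positive_op_bounded[OF C]]])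
  then show ?case
    using poly_cone.scaleR[of _ C "1/2"] by simp
qed (simp add: poly_cone.zero)

lemma bounded_op_sqrt_iter: "bounded_op (sqrt_iter C n)"
  using poly_cone_bounded[OF sqrt_iter_poly_cone positive_op_bounded[OF C]] .

lemma sqrt_iter_commute: "sqrt_iter C m (sqrt_iter C n x) = sqrt_iter C n (sqrt_iter C m x)"
  using poly_cone_commute[OF sqrt_iter_poly_cone bounded_op_bounded_linear[OF bounded_op_sqrt_iter]]
    poly_cone_commute[OF sqrt_iter_poly_cone bounded_op_bounded_linear[OF positive_op_bounded[OF C]]]
  by metis

text \<open>\<open>Y\<^sub>n\<^sub>+\<^sub>2 - Y\<^sub>n\<^sub>+\<^sub>1 = (Y\<^sub>n\<^sub>+\<^sub>1 - Y\<^sub>n)(Y\<^sub>n\<^sub>+\<^sub>1 + Y\<^sub>n)/2\<close>, since the \<open>Y\<^sub>n\<close> commute.\<close>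

lemma sqrt_iter_Suc_diff_poly_cone: "(\<lambda>x. sqrt_iter C (Suc n) x - sqrt_iter C n x) \<in> poly_cone C"
proof (induction n)
  case 0
  then show ?case
    using poly_cone.scaleR[OF poly_cone.funpow[where k = 1], of "1/2"] by simp
next
  case (Suc n)
  let ?Y1 = "sqrt_iter C (Suc n)" and ?Y0 = "sqrt_iter C n"
  have "sqrt_iter C (Suc (Suc n)) x - ?Y1 x = (1/2) *\<^sub>R (?Y1 (?Y1 x + ?Y0 x) - ?Y0 (?Y1 x + ?Y0 x))"
    for x
  proof -
    have "sqrt_iter C (Suc (Suc n)) x - ?Y1 x
        = (1/2) *\<^sub>R (C x + ?Y1 (?Y1 x)) - (1/2) *\<^sub>R (C x + ?Y0 (?Y0 x))"
      by (simp only: sqrt_iter.simps(2)[of C "Suc n"] sqrt_iter.simps(2)[of C n])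
    also have "\<dots> = (1/2) *\<^sub>R (?Y1 (?Y1 x + ?Y0 x) - ?Y0 (?Y1 x + ?Y0 x))"
      using sqrt_iter_commute[of "Suc n" n x]
      by (simp add: bounded_op_simps[OF bounded_op_sqrt_iter] algebra_simps del: sqrt_iter.simps)
    finally show ?thesis .
  qed
  moreover have "(\<lambda>x. (1/2) *\<^sub>R (?Y1 (?Y1 x + ?Y0 x) - ?Y0 (?Y1 x + ?Y0 x))) \<in> poly_cone C"
    using poly_cone.scaleR[OF poly_cone_compose[OF Suc poly_cone.add[OF sqrt_iter_poly_cone
          sqrt_iter_poly_cone] positive_op_bounded[OF C]], of "1/2"]
    by (simp del: sqrt_iter.simps)
  ultimately show ?case
    by (simp del: sqrt_iter.simps)
qed

lemma sqrt_iter_diff_poly_cone: "n \<le> m \<Longrightarrow> (\<lambda>x. sqrt_iter C m x - sqrt_iter C n x) \<in> poly_cone C"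
proof (induction m rule: dec_induct)
  case base
  then show ?case
    using poly_cone.zero by simp
next
  case (step m)
  then show ?case
    using poly_cone.add[OF sqrt_iter_Suc_diff_poly_cone[of m] step.IH] by (simp del: sqrt_iter.simps)
qed

lemma norm_sqrt_iter_le: "norm (sqrt_iter C n x) \<le> norm x"
proof (induction n arbitrary: x)
  case (Suc n)
  have "norm (C x + sqrt_iter C n (sqrt_iter C n x)) \<le> norm x + norm x"
    using norm_triangle_ineq[of "C x" "sqrt_iter C n (sqrt_iter C n x)"] contraction[of x] Suc[of x] Suc[of "sqrt_iter C n x"]
    by linarith
  then show ?case
    by simp
qed simp

lemma incseq_Re_cinner_sqrt_iter: "incseq (\<lambda>n. Re (cinner x (sqrt_iter C n x)))"
proof (rule incseq_SucI)
  fix n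
  have "0 \<le> Re (cinner x (sqrt_iter C (Suc n) x - sqrt_iter C n x))"
    using positive_op_Re_cinner[OF poly_cone_positive[OF sqrt_iter_Suc_diff_poly_cone C]] .
  then show "Re (cinner x (sqrt_iter C n x)) \<le> Re (cinner x (sqrt_iter C (Suc n) x))"
    by (simp add: cinner_diff_right del: sqrt_iter.simps)
qed

lemma norm_sqrt_iter_diff_power2_le:
  assumes "n \<le> m"
  shows "(norm (sqrt_iter C m x - sqrt_iter C n x))\<^sup>2
    \<le> 2 * (Re (cinner x (sqrt_iter C m x)) - Re (cinner x (sqrt_iter C n x)))"
proof -
  have bound: "norm (sqrt_iter C m y - sqrt_iter C n y) \<le> 2 * norm y" for y
    using norm_triangle_ineq4[of "sqrt_iter C m y" "sqrt_iter C n y"]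
      norm_sqrt_iter_le[of m y] norm_sqrt_iter_le[of n y]
    by linarith
  show ?thesis
    using positive_op_norm_power2_le[OF poly_cone_positive[OF sqrt_iter_diff_poly_cone[OF assms] C] bound]
    by (simp add: cinner_diff_right)
qed

lemma Cauchy_sqrt_iter: "Cauchy (\<lambda>n. sqrt_iter C n x)"
proof (rule metric_CauchyI)
  fix e :: real
  assume "0 < e"
  define a where "a n = Re (cinner x (sqrt_iter C n x))" for n
  have "Re (cinner x (sqrt_iter C n x)) \<le> (norm x)\<^sup>2" for n
    using Re_cinner_le_norm[of x "sqrt_iter C n x"]
      mult_left_mono[OF norm_sqrt_iter_le[of n x] norm_ge_zero[of x]]
    by (simp add: power2_eq_square)
  then obtain l where "a \<longlonglongrightarrow> l"
    using incseq_convergent[OF incseq_Re_cinner_sqrt_iter[of x]] unfolding a_def by blast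
  then have "Cauchy a"
    by (rule LIMSEQ_imp_Cauchy)
  then obtain M where M: "\<And>m n. M \<le> m \<Longrightarrow> M \<le> n \<Longrightarrow> dist (a m) (a n) < e\<^sup>2 / 2"
    using metric_CauchyD[of a "e\<^sup>2 / 2"] \<open>0 < e\<close> by auto
  have diff: "(dist (sqrt_iter C m x) (sqrt_iter C n x))\<^sup>2 \<le> 2 * dist (a m) (a n)" if "n \<le> m" for m n
  proof -
    have "(dist (sqrt_iter C m x) (sqrt_iter C n x))\<^sup>2 \<le> 2 * (a m - a n)"
      using norm_sqrt_iter_diff_power2_le[OF that, of x] by (simp add: dist_norm a_def)
    also have "\<dots> \<le> 2 * dist (a m) (a n)"
      by (simp add: dist_real_def abs_if)
    finally show ?thesis .
  qed
  have "dist (sqrt_iter C m x) (sqrt_iter C n x) < e" if "M \<le> m" "M \<le> n" for m n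
  proof -
    have "(dist (sqrt_iter C m x) (sqrt_iter C n x))\<^sup>2 < e\<^sup>2"
      using diff[of n m] diff[of m n] M[OF that] by (cases "n \<le> m") (auto simp: dist_commute)
    then show ?thesis
      using \<open>0 < e\<close> by (metis power_less_imp_less_base less_eq_real_def)
  qed
  then show "\<exists>M. \<forall>m\<ge>M. \<forall>n\<ge>M. dist (sqrt_iter C m x) (sqrt_iter C n x) < e"
    by blast
qed

lemma LIMSEQ_sqrt_iter: "(\<lambda>n. sqrt_iter C n x) \<longlonglongrightarrow> sqrt_iter_lim C x"
  unfolding sqrt_iter_lim_def
  using Cauchy_sqrt_iter Cauchy_convergent_iff convergent_LIMSEQ_iff by blast

lemma sqrt_iter_lim_commute:
  assumes U: "bounded_linear U" and UC: "\<And>x. U (C x) = C (U x)"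
  shows "U (sqrt_iter_lim C x) = sqrt_iter_lim C (U x)"
proof -
  have "(\<lambda>n. U (sqrt_iter C n x)) \<longlonglongrightarrow> U (sqrt_iter_lim C x)"
    using bounded_linear.tendsto[OF U LIMSEQ_sqrt_iter] .
  then have "(\<lambda>n. sqrt_iter C n (U x)) \<longlonglongrightarrow> U (sqrt_iter_lim C x)"
    using poly_cone_commute[OF sqrt_iter_poly_cone U UC] by simp
  then show ?thesis
    using LIMSEQ_sqrt_iter LIMSEQ_unique by blast
qed

lemma norm_sqrt_iter_lim_le: "norm (sqrt_iter_lim C x) \<le> norm x"
  using tendsto_norm[OF LIMSEQ_sqrt_iter[of x]] norm_sqrt_iter_le
  by (intro Lim_bounded[where M = 0]) auto

lemma bounded_op_sqrt_iter_lim: "bounded_op (sqrt_iter_lim C)"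
proof -
  have add: "sqrt_iter_lim C (x + y) = sqrt_iter_lim C x + sqrt_iter_lim C y" for x y
  proof -
    have "(\<lambda>n. sqrt_iter C n (x + y)) \<longlonglongrightarrow> sqrt_iter_lim C x + sqrt_iter_lim C y"
      using tendsto_add[OF LIMSEQ_sqrt_iter[of x] LIMSEQ_sqrt_iter[of y]]
      by (simp add: bounded_op_simps[OF bounded_op_sqrt_iter] del: sqrt_iter.simps)
    then show ?thesis
      using LIMSEQ_sqrt_iter LIMSEQ_unique by blast
  qed
  have scaleC: "sqrt_iter_lim C (scaleC c x) = scaleC c (sqrt_iter_lim C x)" for c x
    using sqrt_iter_lim_commute[OF bounded_linear_scaleC]
      bounded_op_simps(6)[OF positive_op_bounded[OF C]] by metis
  then have "sqrt_iter_lim C (r *\<^sub>R x) = r *\<^sub>R sqrt_iter_lim C x" for r x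
    by (simp add: scaleR_scaleC)
  then have "bounded_linear (sqrt_iter_lim C)"
    using add norm_sqrt_iter_lim_le by (intro bounded_linear_intro[where K = 1]) auto
  then show ?thesis
    using scaleC by (simp add: bounded_op_def)
qed

lemma positive_op_sqrt_iter_lim: "positive_op (sqrt_iter_lim C)"
proof -
  have "Im (cinner x (sqrt_iter_lim C x)) = 0 \<and> 0 \<le> Re (cinner x (sqrt_iter_lim C x))" for x
  proof -
    have lim: "(\<lambda>n. cinner x (sqrt_iter C n x)) \<longlonglongrightarrow> cinner x (sqrt_iter_lim C x)"
      using bounded_linear.tendsto[OF bounded_linear_cinner_right LIMSEQ_sqrt_iter] .
    have Y: "positive_op (sqrt_iter C n)" for n
      using poly_cone_positive[OF sqrt_iter_poly_cone C] .
    have "(\<lambda>n. Im (cinner x (sqrt_iter C n x))) = (\<lambda>n. 0)"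
      using positive_op_Im_cinner[OF Y] by (simp del: sqrt_iter.simps)
    then have "(\<lambda>n. 0) \<longlonglongrightarrow> Im (cinner x (sqrt_iter_lim C x))"
      using tendsto_Im[OF lim] by simp
    moreover have "0 \<le> Re (cinner x (sqrt_iter_lim C x))"
      by (rule LIMSEQ_le_const[OF tendsto_Re[OF lim]]) (use positive_op_Re_cinner[OF Y] in auto)
    ultimately show ?thesis
      by (simp add: LIMSEQ_const_iff)
  qed
  then show ?thesis
    by (simp add: positive_op_def bounded_op_sqrt_iter_lim)
qed

lemma sqrt_iter_lim_fixpoint:
  "sqrt_iter_lim C x = (1/2) *\<^sub>R (C x + sqrt_iter_lim C (sqrt_iter_lim C x))"
proof -
  let ?L = "sqrt_iter_lim C"
  have "(\<lambda>n. sqrt_iter C n (sqrt_iter C n x - ?L x)) \<longlonglongrightarrow> 0"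
  proof (rule Lim_null_comparison)
    show "\<forall>\<^sub>F n in sequentially. norm (sqrt_iter C n (sqrt_iter C n x - ?L x))
        \<le> norm (sqrt_iter C n x - ?L x)"
      using norm_sqrt_iter_le by simp
    show "(\<lambda>n. norm (sqrt_iter C n x - ?L x)) \<longlonglongrightarrow> 0"
      using LIMSEQ_sqrt_iter[of x] by (simp add: LIM_zero_iff tendsto_norm_zero_iff)
  qed
  moreover have "(\<lambda>n. sqrt_iter C n (?L x) - ?L (?L x)) \<longlonglongrightarrow> 0"
    using LIMSEQ_sqrt_iter[of "?L x"] by (simp add: LIM_zero_iff)
  ultimately have "(\<lambda>n. sqrt_iter C n (sqrt_iter C n x) - ?L (?L x)) \<longlonglongrightarrow> 0"
    using tendsto_add_zero by (fastforce simp: bounded_op_simps[OF bounded_op_sqrt_iter]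
        simp del: sqrt_iter.simps)
  then have "(\<lambda>n. sqrt_iter C (Suc n) x) \<longlonglongrightarrow> (1/2) *\<^sub>R (C x + ?L (?L x))"
    by (simp add: LIM_zero_iff tendsto_intros)
  then show ?thesis
    using LIMSEQ_unique[OF LIMSEQ_Suc[OF LIMSEQ_sqrt_iter]] by blast
qed

text \<open>The square root of \<open>1 - C\<close> is \<open>1 - L\<close> for the limit \<open>L\<close> of the iteration.\<close>

lemma positive_op_sqrt_ident_minus_exists:
  "\<exists>S. positive_op S \<and> (\<forall>x. S (S x) = x - C x) \<and>
    (\<forall>U. bounded_linear U \<longrightarrow> (\<forall>x. U (C x) = C (U x)) \<longrightarrow> (\<forall>x. U (S x) = S (U x)))"
proof (intro exI conjI allI impI)
  let ?L = "sqrt_iter_lim C"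
  show "positive_op (\<lambda>x. x - ?L x)"
    using positive_op_ident_minus[OF positive_op_sqrt_iter_lim norm_sqrt_iter_lim_le] .
  fix x
  have "2 *\<^sub>R ?L x = C x + ?L (?L x)"
    using sqrt_iter_lim_fixpoint[of x] by (metis scaleR_half_double scaleR_2 scaleR_right_distrib)
  then show "x - ?L x - ?L (x - ?L x) = x - C x"
    by (simp add: bounded_op_simps[OF bounded_op_sqrt_iter_lim] algebra_simps scaleR_2)
next
  fix U x
  assume "bounded_linear U" "\<forall>x. U (C x) = C (U x)"
  then show "U (x - sqrt_iter_lim C x) = U x - sqrt_iter_lim C (U x)"
    using sqrt_iter_lim_commute by (simp add: linear_simps)
qed

end

lemma positive_op_sqrt_exists:
  assumes T: "positive_op T"
  shows "\<exists>S. positive_op S \<and> (\<forall>x. S (S x) = T x) \<and>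
    (\<forall>U. bounded_linear U \<longrightarrow> (\<forall>x. U (T x) = T (U x)) \<longrightarrow> (\<forall>x. U (S x) = S (U x)))"
proof -
  obtain K where K: "0 < K" "\<And>x. norm (T x) \<le> norm x * K"
    using bounded_linear.pos_bounded[OF bounded_op_bounded_linear[OF positive_op_bounded[OF T]]]
    by blast
  define T1 where "T1 = (\<lambda>x. (1 / K) *\<^sub>R T x)"
  have T1: "positive_op T1"
    unfolding T1_def using positive_op_scaleR[OF T] K(1) by simp
  have "norm (T1 y) \<le> norm y" for y
    using K by (simp add: T1_def divide_simps mult.commute)
  from positive_op_sqrt_ident_minus_exists[OF positive_op_ident_minus[OF T1 this] norm_ident_minus_le[OF T1 this]]
  obtain S where S: "positive_op S" "\<And>x. S (S x) = T1 x"
    and S_commute: "\<And>U x. bounded_linear U \<Longrightarrow> \<forall>x. U (x - T1 x) = U x - T1 (U x)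
      \<Longrightarrow> U (S x) = S (U x)"
    by auto
  show ?thesis
  proof (intro exI conjI allI impI)
    show "positive_op (\<lambda>x. sqrt K *\<^sub>R S x)"
      using positive_op_scaleR[OF S(1)] K(1) by simp
    show "sqrt K *\<^sub>R S (sqrt K *\<^sub>R S x) = T x" for x
      using K(1) S(2) by (simp add: bounded_op_simps[OF positive_op_bounded[OF S(1)]] T1_def)
    show "U (sqrt K *\<^sub>R S x) = sqrt K *\<^sub>R S (U x)"
      if "bounded_linear U" "\<forall>x. U (T x) = T (U x)" for U x
      using S_commute[OF that(1)] that by (simp add: linear_simps T1_def)
  qed
qed

lemma commuting_positive_sqrt_unique:
  assumes R: "positive_op R" and S: "positive_op S"
    and square: "\<And>x. R (R x) = S (S x)" and commute: "\<And>x. R (S x) = S (R x)"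
  shows "R = S"
proof
  fix x
  note R_simps = bounded_op_simps[OF positive_op_bounded[OF R]]
  note S_simps = bounded_op_simps[OF positive_op_bounded[OF S]]
  define y where "y = R x - S x"
  have "R y + S y = 0"
    using square commute by (simp add: y_def R_simps S_simps)
  then have "Re (cinner y (R y)) + Re (cinner y (S y)) = 0"
    by (metis cinner_add_right cinner_zero_right plus_complex.sel(1) zero_complex.sel(1))
  then have "Re (cinner y (R y)) = 0" "Re (cinner y (S y)) = 0"
    using positive_op_Re_cinner[OF R, of y] positive_op_Re_cinner[OF S, of y] by linarith+
  moreover obtain KR KS where "\<And>x. norm (R x) \<le> KR * norm x" "0 \<le> KR"
    "\<And>x. norm (S x) \<le> KS * norm x" "0 \<le> KS"
    using bounded_linear.nonneg_bounded[OF bounded_op_bounded_linear[OF positive_op_bounded[OF R]]]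
      bounded_linear.nonneg_bounded[OF bounded_op_bounded_linear[OF positive_op_bounded[OF S]]]
    by (metis mult.commute)
  ultimately have "R y = 0" "S y = 0"
    using positive_op_norm_power2_le[OF R, of KR y] positive_op_norm_power2_le[OF S, of KS y] by auto
  then have "cinner y y = 0"
    using positive_op_selfadjoint[OF R, of x y] positive_op_selfadjoint[OF S, of x y]
    by (simp add: y_def cinner_diff_left)
  then show "R x = S x"
    by (simp add: cinner_self_eq_zero y_def)
qed

lemma op_sqrt_eqI:
  assumes S: "positive_op S" and square: "\<And>x. S (S x) = T x"
  shows "op_sqrt T = S"
proof -
  have "positive_op T"
  proof (rule positive_op_pullback[OF positive_op_ident])
    show "bounded_op T"
      using bounded_op_compose[OF positive_op_bounded[OF S] positive_op_bounded[OF S]] square by simp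
    show "cinner x (T x) = cinner (S x) (S x)" for x
      using positive_op_selfadjoint[OF S, of x "S x"] square[of x] by simp
  qed
  then obtain R where R: "positive_op R" "\<And>x. R (R x) = T x"
    and R_commute: "\<And>U x. bounded_linear U \<Longrightarrow> \<forall>x. U (T x) = T (U x) \<Longrightarrow> U (R x) = R (U x)"
    using positive_op_sqrt_exists[of T] by blast
  text \<open>A positive square root \<open>S'\<close> of \<open>T\<close> commutes with \<open>T = S'\<^sup>2\<close>, hence with \<open>R\<close>.\<close>
  have eq_R: "S' = R" if S': "positive_op S'" "\<And>x. S' (S' x) = T x" for S'
  proof (rule commuting_positive_sqrt_unique[OF S'(1) R(1)])
    show "S' (S' x) = R (R x)" for x
      using S'(2) R(2) by simp
    have "S' (T x) = T (S' x)" for x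
      using S'(2)[of x] S'(2)[of "S' x"] by simp
    then show "S' (R x) = R (S' x)" for x
      using R_commute[OF bounded_op_bounded_linear[OF positive_op_bounded[OF S'(1)]]] by simp
  qed
  show ?thesis
    unfolding op_sqrt_def
  proof (rule the_equality)
    show "positive_op S \<and> S \<circ> S = T"
      using S square by (simp add: fun_eq_iff)
    show "S' = S" if S': "positive_op S' \<and> S' \<circ> S' = T" for S'
    proof -
      have "S' (S' x) = T x" for x
        using S' by (simp add: fun_eq_iff)
      then show ?thesis
        using eq_R[of S'] eq_R[OF S square] S' by simp
    qed
  qed
qed

lemma
  assumes T: "positive_op T"
  shows positive_op_op_sqrt: "positive_op (op_sqrt T)"
    and op_sqrt_square: "op_sqrt T (op_sqrt T x) = T x"
    and op_sqrt_commute: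
      "bounded_linear U \<Longrightarrow> (\<And>x. U (T x) = T (U x)) \<Longrightarrow> U (op_sqrt T x) = op_sqrt T (U x)"
proof -
  obtain R where R: "positive_op R" "\<And>x. R (R x) = T x"
    and R_commute: "\<And>U x. bounded_linear U \<Longrightarrow> \<forall>x. U (T x) = T (U x) \<Longrightarrow> U (R x) = R (U x)"
    using positive_op_sqrt_exists[OF T] by blast
  have eq: "op_sqrt T = R"
    using op_sqrt_eqI[OF R] .
  show "positive_op (op_sqrt T)"
    using R(1) eq by simp
  show "op_sqrt T (op_sqrt T x) = T x"
    using R(2) eq by simp
  show "U (op_sqrt T x) = op_sqrt T (U x)" if "bounded_linear U" "\<And>x. U (T x) = T (U x)"
    using R_commute[OF that(1)] that(2) eq by simp
qed

lemma positive_op_compose_commuting: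
  assumes P: "positive_op P" and Q: "positive_op Q" and commute: "\<And>x. P (Q x) = Q (P x)"
  shows "positive_op (\<lambda>x. P (Q x))"
proof (rule positive_op_pullback[OF Q bounded_op_compose[OF positive_op_bounded[OF P] positive_op_bounded[OF Q]]])
  fix x
  have "Q (op_sqrt P x) = op_sqrt P (Q x)"
    using op_sqrt_commute[OF P bounded_op_bounded_linear[OF positive_op_bounded[OF Q]] commute[symmetric]] .
  then show "cinner x (P (Q x)) = cinner (op_sqrt P x) (Q (op_sqrt P x))"
    using positive_op_selfadjoint[OF positive_op_op_sqrt[OF P], of x "op_sqrt P (Q x)"]
    by (simp add: op_sqrt_square[OF P])
qed

section \<open>Invertible operators\<close>

lemma op_inv_eqI:
  assumes "S \<circ> T = id" "T \<circ> S = id"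
  shows "op_inv T = S"
  unfolding op_inv_def
proof (rule the_equality)
  show "S \<circ> T = id \<and> T \<circ> S = id"
    using assms by simp
  show "S' = S" if "S' \<circ> T = id \<and> T \<circ> S' = id" for S'
  proof -
    have "S' = (S' \<circ> T) \<circ> S"
      using assms(2) by (simp add: comp_assoc)
    then show ?thesis
      using that by simp
  qed
qed

lemma
  assumes "invertible_op T"
  shows bounded_op_op_inv: "bounded_op (op_inv T)"
    and op_inv_cancel_left: "op_inv T (T x) = x"
    and op_inv_cancel_right: "T (op_inv T x) = x"
proof -
  obtain S where "bounded_op S" "S \<circ> T = id" "T \<circ> S = id"
    using assms by (auto simp: invertible_op_def)
  moreover from this have "op_inv T = S"
    by (simp add: op_inv_eqI)
  ultimately show "bounded_op (op_inv T)" "op_inv T (T x) = x" "T (op_inv T x) = x"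
    by (simp_all add: pointfree_idE)
qed

lemma op_inv_commute:
  assumes "invertible_op T" "\<And>x. U (T x) = T (U x)"
  shows "U (op_inv T x) = op_inv T (U x)"
proof -
  have "U (op_inv T x) = op_inv T (T (U (op_inv T x)))"
    using op_inv_cancel_left[OF assms(1)] by simp
  also have "\<dots> = op_inv T (U x)"
    using op_inv_cancel_right[OF assms(1)] assms(2)[symmetric] by simp
  finally show ?thesis .
qed

lemma positive_op_op_inv:
  assumes T: "positive_op T" and "invertible_op T"
  shows "positive_op (op_inv T)"
proof (rule positive_op_pullback[OF T bounded_op_op_inv[OF \<open>invertible_op T\<close>]])
  show "cinner x (op_inv T x) = cinner (op_inv T x) (T (op_inv T x))" for x
    using positive_op_selfadjoint[OF T, of "op_inv T x" "op_inv T x"]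
    by (simp add: op_inv_cancel_right[OF \<open>invertible_op T\<close>])
qed

lemma invertible_op_op_sqrt:
  assumes T: "positive_op T" and "invertible_op T"
  shows "invertible_op (op_sqrt T)"
proof -
  let ?S = "op_sqrt T" and ?T' = "op_inv T"
  have "?S (T x) = T (?S x)" for x
    by (simp flip: op_sqrt_square[OF T])
  then have commute: "?S (?T' x) = ?T' (?S x)" for x
    by (rule op_inv_commute[OF \<open>invertible_op T\<close>])
  show ?thesis
    unfolding invertible_op_def
  proof (intro conjI exI)
    show "bounded_op ?S" "bounded_op (\<lambda>x. ?S (?T' x))"
      using positive_op_bounded[OF positive_op_op_sqrt[OF T]]
        bounded_op_compose[OF _ bounded_op_op_inv[OF \<open>invertible_op T\<close>]] by auto
    show "(\<lambda>x. ?S (?T' x)) \<circ> ?S = id" "?S \<circ> (\<lambda>x. ?S (?T' x)) = id"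
      using \<open>invertible_op T\<close>
      by (simp_all add: fun_eq_iff commute op_sqrt_square[OF T] op_inv_cancel_left op_inv_cancel_right)
  qed
qed

lemma positive_op_bounded_below_contraction:
  assumes T: "positive_op T" and "0 < \<delta>" and below: "\<And>x. \<delta> * (norm x)\<^sup>2 \<le> Re (cinner x (T x))"
  obtains c q where "0 < c" "0 \<le> q" "q < 1" "\<And>e. norm (e - c *\<^sub>R T e) \<le> q * norm e"
proof -
  obtain K0 where K0: "\<And>x. norm (T x) \<le> norm x * K0"
    using bounded_linear.bounded[OF bounded_op_bounded_linear[OF positive_op_bounded[OF T]]] by blast
  define K where "K = max K0 \<delta>"
  have "0 < K" "\<delta> \<le> K"
    using \<open>0 < \<delta>\<close> by (auto simp: K_def)
  have K: "norm (T x) \<le> norm x * K" for x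
    using K0[of x] mult_left_mono[of K0 K "norm x"] by (simp add: K_def)
  define c where "c = \<delta> / K\<^sup>2"
  define r where "r = 1 - \<delta>\<^sup>2 / K\<^sup>2"
  have "0 < c"
    using \<open>0 < \<delta>\<close> \<open>0 < K\<close> by (simp add: c_def)
  have "0 \<le> r" "r < 1"
    using \<open>0 < \<delta>\<close> \<open>\<delta> \<le> K\<close> power_mono[OF \<open>\<delta> \<le> K\<close>] by (simp_all add: r_def)
  have "norm (e - c *\<^sub>R T e) \<le> sqrt r * norm e" for e
  proof -
    have "(norm (e - c *\<^sub>R T e))\<^sup>2 = (norm e)\<^sup>2 - 2 * c * Re (cinner e (T e)) + c\<^sup>2 * (norm (T e))\<^sup>2"
      using \<open>0 < c\<close> by (simp add: norm_diff_power2 cinner_scaleR_right power_mult_distrib)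
    also have "\<dots> \<le> (norm e)\<^sup>2 - 2 * c * (\<delta> * (norm e)\<^sup>2) + c\<^sup>2 * (norm e * K)\<^sup>2"
      using below[of e] power_mono[OF K[of e]] \<open>0 < c\<close>
      by (intro add_mono diff_mono mult_left_mono) auto
    also have "\<dots> = r * (norm e)\<^sup>2"
      using \<open>0 < K\<close> by (simp add: r_def c_def field_simps power2_eq_square)
    finally have "norm (e - c *\<^sub>R T e) \<le> sqrt (r * (norm e)\<^sup>2)"
      by (rule real_le_rsqrt)
    then show ?thesis
      by (simp add: real_sqrt_mult)
  qed
  then show ?thesis
    using that[of c "sqrt r"] \<open>0 < c\<close> \<open>0 \<le> r\<close> \<open>r < 1\<close> by simp
qed

lemma positive_op_bounded_below_invertible:
  assumes T: "positive_op T" and "0 < \<delta>" and below: "\<And>x. \<delta> * (norm x)\<^sup>2 \<le> Re (cinner x (T x))"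
  shows "invertible_op T"
proof -
  note T_simps = bounded_op_simps[OF positive_op_bounded[OF T]]
  obtain c q where "0 < c" "0 \<le> q" "q < 1" and contraction: "\<And>e. norm (e - c *\<^sub>R T e) \<le> q * norm e"
    using positive_op_bounded_below_contraction[OF T \<open>0 < \<delta>\<close> below] by blast
  text \<open>The solution of \<open>T x = y\<close> is the fixed point of \<open>x \<mapsto> x - c (T x - y)\<close>.\<close>
  have "\<exists>x. T x = y" for y
  proof -
    define f where "f x = x - c *\<^sub>R (T x - y)" for x
    have "dist (f x) (f x') \<le> q * dist x x'" for x x'
      using contraction[of "x - x'"] by (simp add: f_def dist_norm T_simps algebra_simps)
    then obtain x where "f x = x"
      using banach_fix_type[OF \<open>0 \<le> q\<close> \<open>q < 1\<close>, of f] by auto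
    then have "T x = y"
      using \<open>0 < c\<close> by (simp add: f_def)
    then show ?thesis ..
  qed
  then have "surj T"
    by (metis surj_def)
  have "inj T"
  proof (rule injI)
    fix a b
    assume "T a = T b"
    then have "\<delta> * (norm (a - b))\<^sup>2 \<le> 0"
      using below[of "a - b"] by (simp add: T_simps)
    then show "a = b"
      using \<open>0 < \<delta>\<close> by (simp add: mult_le_0_iff)
  qed
  define S where "S = inv T"
  have TS: "T (S y) = y" for y
    using \<open>surj T\<close> by (simp add: S_def surj_f_inv_f)
  have ST: "S (T x) = x" for x
    using \<open>inj T\<close> by (simp add: S_def)
  have S_add: "S (a + b) = S a + S b" for a b
    using ST[of "S a + S b"] by (simp add: T_simps TS)
  have S_scaleC: "S (scaleC k a) = scaleC k (S a)" for k a
    using ST[of "scaleC k (S a)"] by (simp add: T_simps TS)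
  have S_scaleR: "S (r *\<^sub>R a) = r *\<^sub>R S a" for r a
    using S_scaleC[of "complex_of_real r"] by (simp add: scaleR_scaleC)
  have "norm (S y) \<le> norm y * (1 / \<delta>)" for y
  proof -
    have "norm (S y) * (\<delta> * norm (S y)) \<le> norm (S y) * norm y"
      using below[of "S y"] Re_cinner_le_norm[of "S y" y] by (simp add: TS power2_eq_square algebra_simps)
    then have "\<delta> * norm (S y) \<le> norm y"
      by (cases "S y = 0") (auto simp: mult_le_cancel_left_pos)
    then show ?thesis
      using \<open>0 < \<delta>\<close> by (simp add: field_simps)
  qed
  then have "bounded_linear S"
    using S_add S_scaleR by (intro bounded_linear_intro[where K = "1 / \<delta>"]) auto
  then have "bounded_op S"
    using S_scaleC by (simp add: bounded_op_def)
  then show ?thesis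
    unfolding invertible_op_def
    using positive_op_bounded[OF T] by (intro conjI exI[of _ S]) (simp_all add: fun_eq_iff TS ST)
qed

lemma invertible_positive_op_bounded_below:
  assumes A: "positive_op A" and "invertible_op A"
  obtains \<delta> where "0 < \<delta>" "\<And>x. \<delta> * (norm x)\<^sup>2 \<le> Re (cinner x (A x))"
proof -
  obtain KA where "0 < KA" "\<And>x. norm (A x) \<le> norm x * KA"
    using bounded_linear.pos_bounded[OF bounded_op_bounded_linear[OF positive_op_bounded[OF A]]]
    by blast
  then have KA: "norm (A x) \<le> KA * norm x" for x
    by (simp add: mult.commute)
  obtain KI where "0 < KI" and KI: "\<And>x. norm (op_inv A x) \<le> norm x * KI"
    using bounded_linear.pos_bounded[OF bounded_op_bounded_linear[OF bounded_op_op_inv[OF \<open>invertible_op A\<close>]]]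
    by blast
  have "(norm x)\<^sup>2 \<le> (KI\<^sup>2 * KA) * Re (cinner x (A x))" for x
  proof -
    have "norm x \<le> norm (A x) * KI"
      using KI[of "A x"] by (simp add: op_inv_cancel_left[OF \<open>invertible_op A\<close>])
    then have "(norm x)\<^sup>2 \<le> (norm (A x) * KI)\<^sup>2"
      by (rule power_mono) simp
    also have "\<dots> = KI\<^sup>2 * (norm (A x))\<^sup>2"
      by (simp add: power_mult_distrib)
    also have "\<dots> \<le> KI\<^sup>2 * (KA * Re (cinner x (A x)))"
      using positive_op_norm_power2_le[OF A KA] \<open>0 < KA\<close> by (simp add: mult_left_mono)
    finally show ?thesis
      by (simp add: mult.assoc)
  qed
  then show ?thesis
    using that[of "1 / (KI\<^sup>2 * KA)"] \<open>0 < KA\<close> \<open>0 < KI\<close> by (simp add: field_simps)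
qed

section \<open>Operator matrices\<close>

lemma op_matrix_apply [simp]:
  "op_matrix P Q R S p = (P (fst p) + Q (snd p), R (fst p) + S (snd p))"
  by (simp add: op_matrix_def case_prod_beta)

lemma bounded_op_matrix:
  fixes P Q R S :: "'a::complex_hilbert \<Rightarrow> 'a"
  assumes "bounded_op P" "bounded_op Q" "bounded_op R" "bounded_op S"
  shows "bounded_op (op_matrix P Q R S)"
proof -
  have row: "bounded_linear (\<lambda>p::'a \<times> 'a. F (fst p) + G (snd p))"
    if "bounded_op F" "bounded_op G" for F G :: "'a \<Rightarrow> 'a"
    using bounded_linear_add[OF bounded_linear_compose[OF bounded_op_bounded_linear[OF that(1)]
          bounded_linear_fst] bounded_linear_compose[OF bounded_op_bounded_linear[OF that(2)]
          bounded_linear_snd]]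
    by simp
  have "bounded_linear (op_matrix P Q R S)"
    unfolding op_matrix_apply[abs_def] using bounded_linear_Pair[OF row[OF assms(1,2)] row[OF assms(3,4)]] .
  moreover have "op_matrix P Q R S (scaleC c p) = scaleC c (op_matrix P Q R S p)" for c p
    by (simp add: scaleC_prod_def scaleC_add_right bounded_op_simps(6)[OF assms(1)]
        bounded_op_simps(6)[OF assms(2)] bounded_op_simps(6)[OF assms(3)] bounded_op_simps(6)[OF assms(4)])
  ultimately show ?thesis
    by (simp add: bounded_op_def)
qed

lemma positive_op_matrix_diag:
  fixes P S :: "'a::complex_hilbert \<Rightarrow> 'a"
  assumes P: "positive_op P" and S: "positive_op S"
  shows "positive_op (op_matrix P (\<lambda>_. 0) (\<lambda>_. 0) S)"
proof -
  have "cinner p (op_matrix P (\<lambda>_. 0) (\<lambda>_. 0) S p) = cinner (fst p) (P (fst p)) + cinner (snd p) (S (snd p))"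
    for p
    by (cases p) simp
  moreover have "bounded_op (op_matrix P (\<lambda>_. 0) (\<lambda>_. 0) S)"
    using bounded_op_matrix[OF positive_op_bounded[OF P] bounded_op_zero bounded_op_zero
        positive_op_bounded[OF S]] .
  ultimately show ?thesis
    using P S by (simp add: positive_op_def)
qed

lemma bounded_op_matrix_lower_left:
  fixes A X Y B :: "'a::complex_hilbert \<Rightarrow> 'a"
  assumes B: "bounded_op B" and M: "bounded_op (op_matrix A X Y B)"
  shows "bounded_op Y"
proof -
  define Y' where "Y' x = snd (op_matrix A X Y B (x, 0))" for x
  have "bounded_linear Y'"
    using bounded_linear_compose[OF bounded_linear_snd bounded_linear_compose[OF
          bounded_op_bounded_linear[OF M] bounded_linear_Pair[OF bounded_linear_ident bounded_linear_zero]]]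
    by (simp add: Y'_def[abs_def])
  moreover have "Y' (scaleC c x) = scaleC c (Y' x)" for c x
    using bounded_op_simps(6)[OF M, of c "(x, 0)"] by (simp add: Y'_def scaleC_prod_def)
  moreover have "Y' = Y"
    using bounded_op_simps(3)[OF B] by (simp add: Y'_def fun_eq_iff)
  ultimately show ?thesis
    by (simp add: bounded_op_def)
qed

lemma positive_op_matrix_lower_right:
  fixes A X Y B :: "'a::complex_hilbert \<Rightarrow> 'a"
  assumes B: "bounded_op B" and M: "positive_op (op_matrix A X Y B)"
  shows "positive_op B"
proof (rule positive_op_pullback[OF M B])
  have "Y 0 = 0"
    using bounded_op_simps(3)[OF bounded_op_matrix_lower_left[OF B positive_op_bounded[OF M]]] .
  then show "cinner y (B y) = cinner (0, y) (op_matrix A X Y B (0, y))" for y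
    by simp
qed

text \<open>Evaluating the form of \<open>M\<close> at \<open>(- A\<^sup>-\<^sup>1 X y, y)\<close> gives the form of the Schur complement at \<open>y\<close>.\<close>

lemma positive_op_schur_complement:
  fixes A X Y B :: "'a::complex_hilbert \<Rightarrow> 'a"
  assumes X: "bounded_op X" and B: "bounded_op B" and A: "invertible_op A"
    and M: "positive_op (op_matrix A X Y B)"
  shows "positive_op (\<lambda>y. B y - Y (op_inv A (X y)))"
proof (rule positive_op_pullback[OF M])
  have Y: "bounded_op Y"
    using bounded_op_matrix_lower_left[OF B positive_op_bounded[OF M]] .
  show "bounded_op (\<lambda>y. B y - Y (op_inv A (X y)))"
    by (rule bounded_op_diff[OF B bounded_op_compose[OF Y bounded_op_compose[OF bounded_op_op_inv[OF A] X]]])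
  show "cinner y (B y - Y (op_inv A (X y)))
      = cinner (- op_inv A (X y), y) (op_matrix A X Y B (- op_inv A (X y), y))" for y
    using A by (simp add: bounded_op_simps[OF Y] op_inv_cancel_right
        bounded_op_simps[of A, OF conjunct1[OF A[unfolded invertible_op_def]]])
qed

section \<open>Square root of a commuting positive block operator\<close>

locale commuting_block_matrix =
  fixes A B X Y :: "'a::complex_hilbert \<Rightarrow> 'a"
  assumes bounded_B: "bounded_op B" and bounded_X: "bounded_op X"
    and AX: "\<And>x. A (X x) = X (A x)" and AY: "\<And>x. A (Y x) = Y (A x)" and AB: "\<And>x. A (B x) = B (A x)"
    and XY: "\<And>x. X (Y x) = Y (X x)" and XB: "\<And>x. X (B x) = B (X x)" and YB: "\<And>x. Y (B x) = B (Y x)"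
    and positive_A: "positive_op A" and invertible_A: "invertible_op A"
    and positive_M: "positive_op (op_matrix A X Y B)"
begin

lemma bounded_A: "bounded_op A"
  using positive_op_bounded[OF positive_A] .

lemma bounded_Y: "bounded_op Y"
  using bounded_op_matrix_lower_left[OF bounded_B positive_op_bounded[OF positive_M]] .

lemma positive_B: "positive_op B"
  using positive_op_matrix_lower_right[OF bounded_B positive_M] .

definition commutant :: "('a \<Rightarrow> 'a) set" where
  "commutant = {U. bounded_op U \<and> (\<forall>x. U (A x) = A (U x)) \<and> (\<forall>x. U (B x) = B (U x)) \<and>
    (\<forall>x. U (X x) = X (U x)) \<and> (\<forall>x. U (Y x) = Y (U x))}"

lemma entries_in_commutant: "A \<in> commutant" "B \<in> commutant" "X \<in> commutant" "Y \<in> commutant"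
  by (simp_all add: commutant_def bounded_A bounded_B bounded_X bounded_Y AX AY AB XY XB YB)

definition detM :: "'a \<Rightarrow> 'a" where
  "detM = (\<lambda>x. A (B x) - Y (X x))"

text \<open>Since the entries commute, \<open>det M = A (B - Y A\<^sup>-\<^sup>1 X)\<close> is a product of commuting positive
  operators.\<close>

lemma positive_detM: "positive_op detM"
proof -
  let ?P = "\<lambda>y. B y - Y (op_inv A (X y))"
  have A_P: "A (?P x) = detM x" for x
    by (simp add: detM_def bounded_op_simps[OF bounded_A] AY op_inv_cancel_right[OF invertible_A])
  have P_A: "?P (A x) = detM x" for x
    by (simp add: detM_def AX[symmetric] AB op_inv_cancel_left[OF invertible_A])
  have "positive_op (\<lambda>x. A (?P x))"
    using positive_op_compose_commuting[OF positive_A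
        positive_op_schur_complement[OF bounded_X bounded_B invertible_A positive_M]] A_P P_A
    by simp
  then show ?thesis
    by (simp add: A_P)
qed

lemma commutant_commute_detM: "U \<in> commutant \<Longrightarrow> U (detM x) = detM (U x)"
  by (simp add: commutant_def detM_def bounded_op_simps)

definition Q :: "'a \<Rightarrow> 'a" where
  "Q = op_sqrt detM"

lemma positive_Q: "positive_op Q"
  unfolding Q_def using positive_op_op_sqrt[OF positive_detM] .

lemma Q_Q: "Q (Q x) = A (B x) - Y (X x)"
  unfolding Q_def using op_sqrt_square[OF positive_detM] by (simp add: detM_def)

lemma commutant_commute_Q: "U \<in> commutant \<Longrightarrow> U (Q x) = Q (U x)"
  unfolding Q_def
  by (rule op_sqrt_commute[OF positive_detM]) (simp_all add: commutant_def bounded_op_bounded_linear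
      commutant_commute_detM)

lemma Q_in_commutant: "Q \<in> commutant"
  using entries_in_commutant[THEN commutant_commute_Q] positive_op_bounded[OF positive_Q]
  by (simp add: commutant_def)

definition T :: "'a \<Rightarrow> 'a" where
  "T = (\<lambda>x. A x + B x + 2 *\<^sub>R Q x)"

lemma positive_T: "positive_op T"
  unfolding T_def
  using positive_op_add[OF positive_op_add[OF positive_A positive_B] positive_op_scaleR[OF positive_Q]]
  by simp

lemma invertible_T: "invertible_op T"
proof -
  obtain \<delta> where "0 < \<delta>" and below: "\<And>x. \<delta> * (norm x)\<^sup>2 \<le> Re (cinner x (A x))"
    using invertible_positive_op_bounded_below[OF positive_A invertible_A] by blast
  have "\<delta> * (norm x)\<^sup>2 \<le> Re (cinner x (T x))" for x
    using below[of x] positive_op_Re_cinner[OF positive_B, of x] positive_op_Re_cinner[OF positive_Q, of x]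
    by (simp add: T_def cinner_add_right cinner_scaleR_right)
  then show ?thesis
    using positive_op_bounded_below_invertible[OF positive_T \<open>0 < \<delta>\<close>] by blast
qed

lemma commutant_commute_T:
  assumes "U \<in> commutant"
  shows "U (T x) = T (U x)"
  using assms commutant_commute_Q[OF assms, of x] by (simp add: T_def commutant_def bounded_op_simps)

definition R :: "'a \<Rightarrow> 'a" where
  "R = op_inv (op_sqrt T)"

lemma positive_R: "positive_op R"
  unfolding R_def
  using positive_op_op_inv[OF positive_op_op_sqrt[OF positive_T] invertible_op_op_sqrt[OF positive_T invertible_T]] .

lemma R_R_T: "R (R (T x)) = x"
  using op_sqrt_square[OF positive_T, of x, symmetric]
    op_inv_cancel_left[OF invertible_op_op_sqrt[OF positive_T invertible_T]]
  by (simp add: R_def)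

lemma commutant_commute_R: "U \<in> commutant \<Longrightarrow> U (R x) = R (U x)"
  unfolding R_def
  by (rule op_inv_commute[OF invertible_op_op_sqrt[OF positive_T invertible_T]], rule op_sqrt_commute[OF positive_T])
    (simp_all add: commutant_def bounded_op_bounded_linear commutant_commute_T)

definition N :: "'a \<times> 'a \<Rightarrow> 'a \<times> 'a" where
  "N = op_matrix (\<lambda>x. A x + Q x) X Y (\<lambda>x. B x + Q x)"

lemma positive_N: "positive_op N"
proof -
  have "N = (\<lambda>p. op_matrix A X Y B p + op_matrix Q (\<lambda>_. 0) (\<lambda>_. 0) Q p)"
    by (simp add: N_def fun_eq_iff algebra_simps)
  then show ?thesis
    using positive_op_add[OF positive_M positive_op_matrix_diag[OF positive_Q positive_Q]] by simp
qed

text \<open>\<open>N\<^sup>2 = T M\<close>: e.g. \<open>(A + Q)\<^sup>2 + X Y = A\<^sup>2 + 2 A Q + (A B - Y X) + X Y = T A\<close>.\<close>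

lemma N_N: "N (N p) = op_matrix (\<lambda>x. T (A x)) (\<lambda>y. T (X y)) (\<lambda>x. T (Y x)) (\<lambda>y. T (B y)) p"
proof -
  note Q_commute = entries_in_commutant[THEN commutant_commute_Q]
  show ?thesis
    by (simp add: N_def T_def Q_Q Q_commute AX AY AB XY XB YB scaleR_2 algebra_simps
        bounded_op_simps[OF bounded_A] bounded_op_simps[OF bounded_B] bounded_op_simps[OF bounded_X]
        bounded_op_simps[OF bounded_Y] bounded_op_simps[OF positive_op_bounded[OF positive_Q]])
qed

lemma op_sqrt_M: "op_sqrt (op_matrix A X Y B) = op_matrix R (\<lambda>_. 0) (\<lambda>_. 0) R \<circ> N"
proof -
  define D where "D = op_matrix R (\<lambda>_. 0) (\<lambda>_. 0) R"
  note R_simps = bounded_op_simps[OF positive_op_bounded[OF positive_R]]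
  have DN: "D (N p) = N (D p)" for p
    using entries_in_commutant[THEN commutant_commute_R] Q_in_commutant[THEN commutant_commute_R]
    by (simp add: D_def N_def R_simps)
  have "D (N (D (N p))) = op_matrix A X Y B p" for p
  proof -
    have "D (N (D (N p))) = D (D (N (N p)))"
      by (simp only: DN)
    also have "\<dots> = op_matrix A X Y B p"
      using R_R_T by (simp add: N_N D_def R_simps bounded_op_simps(1)[OF positive_op_bounded[OF positive_T]])
    finally show ?thesis .
  qed
  then have "op_sqrt (op_matrix A X Y B) = (\<lambda>p. D (N p))"
    using op_sqrt_eqI[OF positive_op_compose_commuting[OF positive_op_matrix_diag[OF positive_R positive_R]
          positive_N DN[unfolded D_def]]] by (simp add: D_def)
  then show ?thesis
    by (simp add: D_def comp_def)
qed

end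

theorem theorem2p10:
  fixes A B X :: "'a::complex_hilbert \<Rightarrow> 'a"
  assumes "bounded_op A" and "bounded_op B" and "bounded_op X"
    and "A \<circ> X = X \<circ> A" and "A \<circ> adj X = adj X \<circ> A" and "A \<circ> B = B \<circ> A"
    and "X \<circ> adj X = adj X \<circ> X" and "X \<circ> B = B \<circ> X" and "adj X \<circ> B = B \<circ> adj X"
    and "positive_op A" and "invertible_op A"
    and "positive_op (op_matrix A X (adj X) B)"
  shows "let trM = (\<lambda>x. A x + B x);
             detM = (\<lambda>x. A (B x) - adj X (X x));
             Q = op_sqrt detM;
             T = (\<lambda>x. trM x + 2 *\<^sub>R Q x);
             R = op_inv (op_sqrt T)
         in positive_op T \<and> invertible_op T \<and>
            op_sqrt (op_matrix A X (adj X) B) =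
              op_matrix R (\<lambda>_. 0) (\<lambda>_. 0) R \<circ>
              op_matrix (\<lambda>x. A x + Q x) X (adj X) (\<lambda>x. B x + Q x)"
proof -
  interpret commuting_block_matrix A B X "adj X"
    by unfold_locales (use assms in \<open>simp_all add: fun_eq_iff\<close>)
  show ?thesis
    using positive_T invertible_T op_sqrt_M
    unfolding Let_def T_def Q_def detM_def R_def N_def by simp
qed

end
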